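(* Let $d$ be a fixed positive integer. If $G$ is an unweighted $d$-regular graph on $n$ vertices that is a $(\frac{d}{10},\frac{n}{2})$-edge expander, then $\rho^*_G=\Theta(n)$ (as $n\to\infty$, with constants depending only on $d$).
   Context: A graph $G=(V,E)$ is an $(\alpha,k)$-edge expander if every $S\subseteq V$ with $|S|\le k$ has at least $\alpha|S|$ edges between $S$ and $V\setminus S$. Unweighted means all edges have weight $1$ and non-edges weight $0$. An HC-tree for $V=\{v_1,\dots,v_n\}$ is a rooted tree with leaf set $V$. For distinct $i,j,k$: $\{i,j|k\}$ holds in $T$ if $\mathrm{LCA}(v_i,v_j)$ is a proper descendant of $\mathrm{LCA}(v_i,v_j,v_k)$; $\{i|j|k\}$ holds if $\mathrm{LCA}(v_i,v_j)=\mathrm{LCA}(v_j,v_k)=\mathrm{LCA}(v_i,v_j,v_k)$. Triplet cost $c_T(i,j,k)$: $w_{ik}+w_{jk}$ if $\{i,j|k\}$; $w_{ij}+w_{jk}$ if $\{i,k|j\}$; $w_{ij}+w_{ik}$ if $\{j,k|i\}$; $w_{ij}+w_{jk}+w_{ik}$ if $\{i|j|k\}$. $\mathrm{TC}_G(T)=\sum c_T(i,j,k)$ and $\mathrm{BC}(G)=\sum\min\{w_{ij}+w_{ik},w_{ij}+w_{jk},w_{ik}+w_{jk}\}$, both over unordered triples of distinct indices. $\rho_G(T)=\mathrm{TC}_G(T)/\mathrm{BC}(G)$ (with $0/0=1$, $x/0=+\infty$ for $x>0$) and $\rho^*_G=\min_T\rho_G(T)$. *)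

theory Defs
  imports Complex_Main "HOL-Library.Extended_Real"
begin

text \<open>A simple undirected unweighted graph on vertices 0..n-1 (v_{i+1} = i), given by
  a symmetric irreflexive adjacency relation supported on {0..<n}.\<close>
definition is_graph :: "nat \<Rightarrow> (nat \<Rightarrow> nat \<Rightarrow> bool) \<Rightarrow> bool" where
  "is_graph n E \<longleftrightarrow> (\<forall>u v. E u v \<longrightarrow> u < n \<and> v < n \<and> u \<noteq> v \<and> E v u)"

definition d_regular :: "nat \<Rightarrow> (nat \<Rightarrow> nat \<Rightarrow> bool) \<Rightarrow> nat \<Rightarrow> bool" where
  "d_regular n E d \<longleftrightarrow> (\<forall>u<n. card {v. v < n \<and> E u v} = d)"

definition wt :: "(nat \<Rightarrow> nat \<Rightarrow> bool) \<Rightarrow> nat \<Rightarrow> nat \<Rightarrow> real" where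
  "wt E i j = (if E i j then 1 else 0)"

definition edge_expander :: "nat \<Rightarrow> (nat \<Rightarrow> nat \<Rightarrow> bool) \<Rightarrow> real \<Rightarrow> real \<Rightarrow> bool" where
  "edge_expander n E \<alpha> k \<longleftrightarrow>
     (\<forall>S. S \<subseteq> {0..<n} \<longrightarrow> real (card S) \<le> k \<longrightarrow>
        real (card {(u, v). u \<in> S \<and> v \<in> {0..<n} - S \<and> E u v}) \<ge> \<alpha> * real (card S))"

datatype hctree = Leaf nat | Node "hctree list"

fun leaves :: "hctree \<Rightarrow> nat list" where
  "leaves (Leaf x) = [x]"
| "leaves (Node ts) = concat (map leaves ts)"

text \<open>No childless internal nodes (every leaf of the rooted tree is labelled).\<close>
fun wf_tree :: "hctree \<Rightarrow> bool" where
  "wf_tree (Leaf x) = True"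
| "wf_tree (Node ts) = (ts \<noteq> [] \<and> (\<forall>t\<in>set ts. wf_tree t))"

definition is_hctree :: "nat \<Rightarrow> hctree \<Rightarrow> bool" where
  "is_hctree n T \<longleftrightarrow> wf_tree T \<and> distinct (leaves T) \<and> set (leaves T) = {0..<n}"

fun subtrees :: "hctree \<Rightarrow> hctree set" where
  "subtrees (Leaf x) = {Leaf x}"
| "subtrees (Node ts) = insert (Node ts) (\<Union>t\<in>set ts. subtrees t)"

definition lca :: "hctree \<Rightarrow> nat set \<Rightarrow> hctree" where
  "lca T A = (THE u. u \<in> subtrees T \<and> A \<subseteq> set (leaves u) \<and>
                (\<forall>v\<in>subtrees T. A \<subseteq> set (leaves v) \<longrightarrow> u \<in> subtrees v))"

definition proper_desc :: "hctree \<Rightarrow> hctree \<Rightarrow> bool" where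
  "proper_desc u v \<longleftrightarrow> u \<in> subtrees v \<and> u \<noteq> v"

definition sep :: "hctree \<Rightarrow> nat \<Rightarrow> nat \<Rightarrow> nat \<Rightarrow> bool" where
  "sep T i j k \<longleftrightarrow> proper_desc (lca T {i, j}) (lca T {i, j, k})"

definition star3 :: "hctree \<Rightarrow> nat \<Rightarrow> nat \<Rightarrow> nat \<Rightarrow> bool" where
  "star3 T i j k \<longleftrightarrow> lca T {i, j} = lca T {j, k} \<and> lca T {j, k} = lca T {i, j, k}"

definition trip_cost :: "(nat \<Rightarrow> nat \<Rightarrow> bool) \<Rightarrow> hctree \<Rightarrow> nat \<Rightarrow> nat \<Rightarrow> nat \<Rightarrow> real" where
  "trip_cost E T i j k =
     (if sep T i j k then wt E i k + wt E j k
      else if sep T i k j then wt E i j + wt E j k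
      else if sep T j k i then wt E i j + wt E i k
      else if star3 T i j k then wt E i j + wt E j k + wt E i k
      else 0)"

text \<open>Unordered triples of distinct indices, represented as i < j < k.\<close>
definition triples :: "nat \<Rightarrow> (nat \<times> nat \<times> nat) set" where
  "triples n = {(i, j, k). i < j \<and> j < k \<and> k < n}"

definition TC :: "nat \<Rightarrow> (nat \<Rightarrow> nat \<Rightarrow> bool) \<Rightarrow> hctree \<Rightarrow> real" where
  "TC n E T = (\<Sum>(i, j, k)\<in>triples n. trip_cost E T i j k)"

definition BC :: "nat \<Rightarrow> (nat \<Rightarrow> nat \<Rightarrow> bool) \<Rightarrow> real" where
  "BC n E = (\<Sum>(i, j, k)\<in>triples n.
      min (wt E i j + wt E i k) (min (wt E i j + wt E j k) (wt E i k + wt E j k)))"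

definition rho :: "nat \<Rightarrow> (nat \<Rightarrow> nat \<Rightarrow> bool) \<Rightarrow> hctree \<Rightarrow> ereal" where
  "rho n E T = (if BC n E = 0 then (if TC n E T = 0 then 1 else \<infinity>)
                else ereal (TC n E T / BC n E))"

definition rho_star :: "nat \<Rightarrow> (nat \<Rightarrow> nat \<Rightarrow> bool) \<Rightarrow> ereal" where
  "rho_star n E = (INF T\<in>{T. is_hctree n T}. rho n E T)"

end

theory Submission
  imports Defs
begin

text \<open>In a d-regular graph BC is, up to a factor 3, the number n d (d - 1) / 2 of paths of length
  two, while no tree costs more than n^2 d; the star therefore has ratio O(n).
  Conversely, in any HC-tree assign to each vertex a the largest subtree containing it that has
  at most n / 2 leaves. These leaf sets partition the vertices, so edge expansion yields at least
  d n / 10 edges leaving their block. The lowest common ancestor of such an edge {a, b} has more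
  than n / 2 leaves, and for each further leaf c the tree does not separate {a, b} from c, so the
  triple pays for the edge. Hence every tree costs \<Omega>(d n^2) and the ratio is \<Omega>(n / d).
  The case d = 1 cannot occur, since a perfect matching is not an expander.\<close>

section \<open>Subtrees and lowest common ancestors\<close>

abbreviation leaf_set :: "hctree \<Rightarrow> nat set" where
  "leaf_set t \<equiv> set (leaves t)"

lemma size_child_less: "t \<in> set ts \<Longrightarrow> size t < size (Node ts)"
  by (induction ts) auto

lemma subtrees_refl: "t \<in> subtrees t"
  by (cases t) auto

lemma leaf_set_subtree: "u \<in> subtrees v \<Longrightarrow> leaf_set u \<subseteq> leaf_set v"
  by (induction v arbitrary: u) auto

lemma size_subtree_le: "u \<in> subtrees v \<Longrightarrow> size u \<le> size v"
  by (induction v arbitrary: u) (fastforce dest: size_child_less)+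

lemma size_proper_subtree_less: "u \<in> subtrees v \<Longrightarrow> u \<noteq> v \<Longrightarrow> size u < size v"
  by (cases v) (auto dest!: size_subtree_le size_child_less)

lemma subtrees_antisym: "u \<in> subtrees v \<Longrightarrow> v \<in> subtrees u \<Longrightarrow> u = v"
  using size_subtree_le size_proper_subtree_less by (meson leD)

lemma finite_subtrees: "finite (subtrees t)"
  by (induction t) auto

lemma Leaf_in_subtrees: "i \<in> leaf_set t \<Longrightarrow> Leaf i \<in> subtrees t"
  by (induction t) auto

lemma distinct_concat_disjoint:
  assumes "distinct (concat (map f xs))" "x \<in> set xs" "y \<in> set xs" "x \<noteq> y"
  shows "set (f x) \<inter> set (f y) = {}"
proof -
  obtain p q where xs: "xs = p @ x # q"
    using assms(2) by (meson split_list)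
  with assms(3,4) consider "y \<in> set p" | "y \<in> set q"
    by auto
  then show ?thesis
  proof cases
    case 1
    then obtain r s where "p = r @ y # s" by (meson split_list)
    then show ?thesis using assms(1) xs by auto
  next
    case 2
    then obtain r s where "q = r @ y # s" by (meson split_list)
    then show ?thesis using assms(1) xs by auto
  qed
qed

lemma subtrees_laminar:
  assumes "distinct (leaves T)" "u \<in> subtrees T" "v \<in> subtrees T"
    "x \<in> leaf_set u" "x \<in> leaf_set v"
  shows "u \<in> subtrees v \<or> v \<in> subtrees u"
  using assms
proof (induction T arbitrary: u v)
  case (Leaf y)
  then show ?case by auto
next
  case (Node ts)
  show ?case
  proof (cases "u = Node ts \<or> v = Node ts")
    case True
    then show ?thesis using Node.prems by auto
  next
    case False
    then obtain t1 t2 where t: "t1 \<in> set ts" "t2 \<in> set ts" "u \<in> subtrees t1" "v \<in> subtrees t2"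
      using Node.prems by auto
    show ?thesis
    proof (cases "t1 = t2")
      case True
      have "distinct (leaves t1)"
        using Node.prems(1) t(1) by (auto simp: distinct_concat_iff)
      then show ?thesis using Node.IH[OF t(1)] True t Node.prems by auto
    next
      case False
      have "x \<in> leaf_set t1" "x \<in> leaf_set t2"
        using leaf_set_subtree t Node.prems by auto
      then show ?thesis
        using distinct_concat_disjoint[OF _ t(1,2) False] Node.prems(1) by auto
    qed
  qed
qed

text \<open>Subtrees sharing a leaf form a chain under the descendant order, so finitely many of
  them have a least and a greatest element.\<close>

lemma subtrees_sharing_leaf_least:
  assumes "distinct (leaves T)" "C \<subseteq> subtrees T" "C \<noteq> {}" "\<forall>v\<in>C. x \<in> leaf_set v"
  obtains u where "u \<in> C" "\<forall>v\<in>C. u \<in> subtrees v"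
proof -
  have "finite C"
    using assms(2) finite_subtrees finite_subset by blast
  then have "Min (size ` C) \<in> size ` C"
    using assms(3) by simp
  then obtain u where u: "u \<in> C" "size u = Min (size ` C)"
    by (metis imageE)
  have "u \<in> subtrees v" if "v \<in> C" for v
  proof -
    have "size u \<le> size v"
      using u \<open>finite C\<close> that by simp
    then show ?thesis
      using subtrees_laminar[OF assms(1), of u v x] assms(2,4) u(1) that
        size_proper_subtree_less subtrees_refl by (metis leD subsetD)
  qed
  then show ?thesis using that u(1) by blast
qed

lemma subtrees_sharing_leaf_greatest:
  assumes "distinct (leaves T)" "C \<subseteq> subtrees T" "C \<noteq> {}" "\<forall>v\<in>C. x \<in> leaf_set v"
  obtains u where "u \<in> C" "\<forall>v\<in>C. v \<in> subtrees u"
proof -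
  have "finite C"
    using assms(2) finite_subtrees finite_subset by blast
  then have "Max (size ` C) \<in> size ` C"
    using assms(3) by simp
  then obtain u where u: "u \<in> C" "size u = Max (size ` C)"
    by (metis imageE)
  have "v \<in> subtrees u" if "v \<in> C" for v
  proof -
    have "size v \<le> size u"
      using u \<open>finite C\<close> that by simp
    then show ?thesis
      using subtrees_laminar[OF assms(1), of u v x] assms(2,4) u(1) that
        size_proper_subtree_less subtrees_refl by (metis leD subsetD)
  qed
  then show ?thesis using that u(1) by blast
qed

lemma lca_spec:
  assumes "distinct (leaves T)" "A \<noteq> {}" "A \<subseteq> leaf_set T"
  shows "lca T A \<in> subtrees T" "A \<subseteq> leaf_set (lca T A)"
    "\<And>v. v \<in> subtrees T \<Longrightarrow> A \<subseteq> leaf_set v \<Longrightarrow> lca T A \<in> subtrees v"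
proof -
  define C where "C = {v \<in> subtrees T. A \<subseteq> leaf_set v}"
  obtain x where "x \<in> A" using assms(2) by blast
  moreover have "T \<in> C"
    unfolding C_def using assms(3) subtrees_refl by auto
  ultimately obtain u where u: "u \<in> C" "\<forall>v\<in>C. u \<in> subtrees v"
    using subtrees_sharing_leaf_least[OF assms(1), of C x] unfolding C_def by blast
  have "lca T A = u"
    unfolding lca_def
  proof (rule the_equality)
    show "u \<in> subtrees T \<and> A \<subseteq> leaf_set u \<and> (\<forall>v\<in>subtrees T. A \<subseteq> leaf_set v \<longrightarrow> u \<in> subtrees v)"
      using u unfolding C_def by auto
  next
    fix w
    assume "w \<in> subtrees T \<and> A \<subseteq> leaf_set w \<and> (\<forall>v\<in>subtrees T. A \<subseteq> leaf_set v \<longrightarrow> w \<in> subtrees v)"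
    then show "w = u"
      using u subtrees_antisym unfolding C_def by blast
  qed
  then show "lca T A \<in> subtrees T" "A \<subseteq> leaf_set (lca T A)"
    "\<And>v. v \<in> subtrees T \<Longrightarrow> A \<subseteq> leaf_set v \<Longrightarrow> lca T A \<in> subtrees v"
    using u unfolding C_def by auto
qed

lemma sum_pairs_symmetric:
  fixes f :: "'a::linorder \<Rightarrow> 'a \<Rightarrow> 'b::comm_semiring_1"
  assumes "\<And>a b. f a b = f b a"
  shows "(\<Sum>a\<in>A. \<Sum>b\<in>A. if a \<noteq> b then f a b else 0) =
         2 * (\<Sum>a\<in>A. \<Sum>b\<in>A. if a < b then f a b else 0)"
proof -
  have "(\<Sum>a\<in>A. \<Sum>b\<in>A. if b < a then f a b else 0) = (\<Sum>b\<in>A. \<Sum>a\<in>A. if b < a then f b a else 0)"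
    by (subst sum.swap) (intro sum.cong refl, simp add: assms[of a b for a b])
  moreover have "(if a \<noteq> b then f a b else 0) = (if a < b then f a b else 0) + (if b < a then f a b else 0)"
    for a b :: 'a
    by auto
  ultimately show ?thesis
    by (simp add: sum.distrib mult_2)
qed

lemma square_sum_eq_pairs:
  fixes f :: "'a::linorder \<Rightarrow> 'b::comm_semiring_1"
  shows "(\<Sum>a\<in>A. f a)\<^sup>2 = (\<Sum>a\<in>A. (f a)\<^sup>2) + 2 * (\<Sum>a\<in>A. \<Sum>b\<in>A. if a < b then f a * f b else 0)"
proof -
  have "(if a = b then f a * f b else 0) + (if a \<noteq> b then f a * f b else 0) = f a * f b" for a b
    by simp
  then have "(\<Sum>a\<in>A. f a)\<^sup>2 = (\<Sum>a\<in>A. \<Sum>b\<in>A. if a = b then f a * f b else 0)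
      + (\<Sum>a\<in>A. \<Sum>b\<in>A. if a \<noteq> b then f a * f b else 0)"
    by (simp add: power2_eq_square sum_product sum.distrib[symmetric])
  also have "(\<Sum>a\<in>A. \<Sum>b\<in>A. if a = b then f a * f b else 0) = (\<Sum>a\<in>A. (f a)\<^sup>2)"
    by (cases "finite A") (simp_all add: power2_eq_square if_distrib sum.delta cong: if_cong)
  finally show ?thesis
    by (subst (asm) sum_pairs_symmetric) (simp_all add: mult.commute)
qed

lemma sum_triples_nested:
  "(\<Sum>(i, j, k)\<in>triples n. f i j k) =
   (\<Sum>i\<in>{0..<n}. \<Sum>j\<in>{0..<n}. \<Sum>k\<in>{0..<n}. if i < j \<and> j < k then f i j k else (0::'a::comm_monoid_add))"
proof -
  let ?P = "\<lambda>(i, j, k). i < j \<and> j < k"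
  have "triples n = {x \<in> {0..<n} \<times> {0..<n} \<times> {0..<n}. ?P x}"
    unfolding triples_def by auto
  then have "(\<Sum>(i, j, k)\<in>triples n. f i j k) =
      (\<Sum>x\<in>{0..<n} \<times> {0..<n} \<times> {0..<n}. if ?P x then (case x of (i, j, k) \<Rightarrow> f i j k) else 0)"
    by (simp only: sum.inter_filter finite_cartesian_product finite_atLeastLessThan)
  also have "\<dots> = (\<Sum>(i, j, k)\<in>{0..<n} \<times> {0..<n} \<times> {0..<n}. if i < j \<and> j < k then f i j k else 0)"
    by (rule sum.cong[OF refl]) (auto split: prod.splits)
  finally show ?thesis
    by (simp add: sum.cartesian_product)
qed

lemma sum_triples_pairs:
  fixes F :: "nat \<Rightarrow> nat \<Rightarrow> nat \<Rightarrow> 'a::comm_monoid_add"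
  shows "(\<Sum>(i, j, k)\<in>triples n. F i j k + F i k j + F j k i) =
         (\<Sum>a\<in>{0..<n}. \<Sum>b\<in>{0..<n}. \<Sum>c\<in>{0..<n}. if a < b \<and> c \<noteq> a \<and> c \<noteq> b then F a b c else 0)"
proof -
  let ?I = "{0..<n}"
  have split_lhs: "(if a < b \<and> b < c then F a b c + F a c b + F b c a else 0) =
      (if a < b \<and> b < c then F a b c else 0) + (if a < b \<and> b < c then F a c b else 0)
      + (if a < b \<and> b < c then F b c a else 0)" for a b c
    by simp
  have split_rhs: "(if a < b \<and> c \<noteq> a \<and> c \<noteq> b then F a b c else 0) =
      (if a < b \<and> b < c then F a b c else 0) + (if a < c \<and> c < b then F a b c else 0)
      + (if c < a \<and> a < b then F a b c else 0)" for a b c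
    by auto
  have middle: "(\<Sum>a\<in>?I. \<Sum>b\<in>?I. \<Sum>c\<in>?I. if a < c \<and> c < b then F a b c else 0) =
        (\<Sum>a\<in>?I. \<Sum>b\<in>?I. \<Sum>c\<in>?I. if a < b \<and> b < c then F a c b else 0)"
    by (rule sum.cong[OF refl], rule sum.swap)
  have "(\<Sum>a\<in>?I. \<Sum>b\<in>?I. \<Sum>c\<in>?I. if c < a \<and> a < b then F a b c else 0) =
        (\<Sum>a\<in>?I. \<Sum>c\<in>?I. \<Sum>b\<in>?I. if c < a \<and> a < b then F a b c else 0)"
    by (rule sum.cong[OF refl], rule sum.swap)
  also have "\<dots> = (\<Sum>a\<in>?I. \<Sum>b\<in>?I. \<Sum>c\<in>?I. if a < b \<and> b < c then F b c a else 0)"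
    by (rule sum.swap)
  finally have smallest: "(\<Sum>a\<in>?I. \<Sum>b\<in>?I. \<Sum>c\<in>?I. if c < a \<and> a < b then F a b c else 0) =
        (\<Sum>a\<in>?I. \<Sum>b\<in>?I. \<Sum>c\<in>?I. if a < b \<and> b < c then F b c a else 0)" .
  show ?thesis
    by (simp only: sum_triples_nested split_lhs split_rhs sum.distrib middle smallest)
qed

lemma wt_nonneg: "0 \<le> wt E a b"
  unfolding wt_def by simp

context
  fixes n :: nat and T :: hctree
  assumes hctree: "is_hctree n T"
begin

lemma distinct_leaves_hctree: "distinct (leaves T)"
  using hctree unfolding is_hctree_def by simp

lemma leaf_set_hctree: "leaf_set T = {0..<n}"
  using hctree unfolding is_hctree_def by simp

lemma lca_hctree:
  assumes "A \<noteq> {}" "A \<subseteq> {0..<n}"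
  shows "lca T A \<in> subtrees T" "A \<subseteq> leaf_set (lca T A)"
    "\<And>v. v \<in> subtrees T \<Longrightarrow> A \<subseteq> leaf_set v \<Longrightarrow> lca T A \<in> subtrees v"
  using lca_spec[OF distinct_leaves_hctree] assms leaf_set_hctree by auto

lemma lca_mono:
  assumes "A \<noteq> {}" "A \<subseteq> B" "B \<subseteq> {0..<n}"
  shows "lca T A \<in> subtrees (lca T B)"
  using lca_hctree[of A] lca_hctree[of B] assms by blast

lemma lca_eq_if_not_sep:
  assumes "a < n" "b < n" "c < n" "\<not> sep T a b c"
  shows "lca T {a, b} = lca T {a, b, c}"
  using lca_mono[of "{a, b}" "{a, b, c}"] assms unfolding sep_def proper_desc_def by auto

lemma not_sep_if_leaf_of_lca:
  assumes "a < n" "b < n" "c < n" "c \<in> leaf_set (lca T {a, b})"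
  shows "\<not> sep T a b c"
proof -
  have "lca T {a, b, c} \<in> subtrees (lca T {a, b})"
    using lca_hctree[of "{a, b}"] lca_hctree[of "{a, b, c}"] assms by auto
  then show ?thesis
    using lca_mono[of "{a, b}" "{a, b, c}"] assms subtrees_antisym
    unfolding sep_def proper_desc_def by auto
qed

lemma trip_cost_ge_unseparated:
  assumes "i < n" "j < n" "k < n"
  shows "wt E i j * (if sep T i j k then 0 else 1) + wt E i k * (if sep T i k j then 0 else 1)
         + wt E j k * (if sep T j k i then 0 else 1) \<le> trip_cost E T i j k"
proof -
  have "star3 T i j k" if "\<not> sep T i j k" "\<not> sep T j k i"
  proof -
    have "lca T {j, k} = lca T {j, k, i}"
      using lca_eq_if_not_sep assms that by blast
    moreover have "{j, k, i} = {i, j, k}"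
      by auto
    ultimately show ?thesis
      using lca_eq_if_not_sep assms that unfolding star3_def by simp
  qed
  then show ?thesis
    unfolding trip_cost_def using wt_nonneg[of E] by auto
qed

lemma TC_ge_sum_lca_leaves:
  "(\<Sum>a\<in>{0..<n}. \<Sum>b\<in>{0..<n}.
      if a < b then wt E a b * real (card (leaf_set (lca T {a, b}) - {a, b})) else 0) \<le> TC n E T"
proof -
  define g where "g a b c = wt E a b * (if sep T a b c then 0 else 1)" for a b c
  have "(\<Sum>a\<in>{0..<n}. \<Sum>b\<in>{0..<n}.
      if a < b then wt E a b * real (card (leaf_set (lca T {a, b}) - {a, b})) else 0) \<le>
      (\<Sum>a\<in>{0..<n}. \<Sum>b\<in>{0..<n}. \<Sum>c\<in>{0..<n}. if a < b \<and> c \<noteq> a \<and> c \<noteq> b then g a b c else 0)"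
  proof (intro sum_mono)
    fix a b
    assume ab: "a \<in> {0..<n}" "b \<in> {0..<n}"
    let ?L = "leaf_set (lca T {a, b}) - {a, b}"
    have "?L \<subseteq> {0..<n}"
      using lca_hctree(1)[of "{a, b}"] leaf_set_subtree leaf_set_hctree ab by blast
    then have "wt E a b * real (card ?L) = (\<Sum>c\<in>{0..<n} \<inter> ?L. wt E a b)"
      by (simp add: Int_absorb1)
    also have "\<dots> = (\<Sum>c\<in>{0..<n}. if c \<in> ?L then wt E a b else 0)"
      by (rule sum.inter_restrict) simp
    also have "\<dots> \<le> (\<Sum>c\<in>{0..<n}. if c \<noteq> a \<and> c \<noteq> b then g a b c else 0)"
      using not_sep_if_leaf_of_lca ab wt_nonneg[of E] unfolding g_def
      by (intro sum_mono) auto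
    finally show "(if a < b then wt E a b * real (card ?L) else 0) \<le>
        (\<Sum>c\<in>{0..<n}. if a < b \<and> c \<noteq> a \<and> c \<noteq> b then g a b c else 0)"
      by simp
  qed
  also have "\<dots> = (\<Sum>(i, j, k)\<in>triples n. g i j k + g i k j + g j k i)"
    by (rule sum_triples_pairs[symmetric])
  also have "\<dots> \<le> TC n E T"
    unfolding TC_def g_def triples_def
    by (intro sum_mono) (auto intro: trip_cost_ge_unseparated)
  finally show ?thesis .
qed

end

section \<open>Regular graphs\<close>

definition wedges :: "(nat \<Rightarrow> nat \<Rightarrow> bool) \<Rightarrow> nat \<Rightarrow> nat \<Rightarrow> nat \<Rightarrow> real" where
  "wedges E i j k = wt E k i * wt E k j + wt E j i * wt E j k + wt E i j * wt E i k"

lemma TC_le: "TC n E T \<le> real n * (\<Sum>a\<in>{0..<n}. \<Sum>b\<in>{0..<n}. wt E a b)"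
proof -
  let ?F = "\<lambda>a b c::nat. wt E a b"
  have "TC n E T \<le> (\<Sum>(i, j, k)\<in>triples n. ?F i j k + ?F i k j + ?F j k i)"
    unfolding TC_def trip_cost_def using wt_nonneg[of E]
    by (intro sum_mono) auto
  also have "\<dots> = (\<Sum>a\<in>{0..<n}. \<Sum>b\<in>{0..<n}. \<Sum>c\<in>{0..<n}. if a < b \<and> c \<noteq> a \<and> c \<noteq> b then ?F a b c else 0)"
    by (rule sum_triples_pairs)
  also have "\<dots> \<le> (\<Sum>a\<in>{0..<n}. \<Sum>b\<in>{0..<n}. \<Sum>c\<in>{0..<n}. wt E a b)"
    using wt_nonneg[of E] by (intro sum_mono) auto
  finally show ?thesis
    by (simp add: sum_distrib_left)
qed

context
  fixes n :: nat and E :: "nat \<Rightarrow> nat \<Rightarrow> bool"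
  assumes graph: "is_graph n E"
begin

lemma adj_sym: "E a b = E b a"
  using graph unfolding is_graph_def by blast

lemma adj_irrefl: "\<not> E a a"
  using graph unfolding is_graph_def by blast

lemma wt_sym: "wt E a b = wt E b a"
  unfolding wt_def using adj_sym by simp

text \<open>Both sides vanish on triples spanning at most one edge; they are 1 and 1 on a path of
  length two and 2 and 3 on a triangle.\<close>

lemma BC_le_wedges: "BC n E \<le> (\<Sum>(i, j, k)\<in>triples n. wedges E i j k)"
  unfolding BC_def wedges_def
proof (intro sum_mono, clarify)
  fix i j k
  show "min (wt E i j + wt E i k) (min (wt E i j + wt E j k) (wt E i k + wt E j k))
      \<le> wt E k i * wt E k j + wt E j i * wt E j k + wt E i j * wt E i k"
    unfolding wt_sym[of k i] wt_sym[of k j] wt_sym[of j i]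
    by (cases "E i j"; cases "E i k"; cases "E j k") (simp_all add: wt_def)
qed

lemma wedges_le_3_BC: "(\<Sum>(i, j, k)\<in>triples n. wedges E i j k) \<le> 3 * BC n E"
  unfolding BC_def wedges_def sum_distrib_left
proof (intro sum_mono, clarify)
  fix i j k
  show "wt E k i * wt E k j + wt E j i * wt E j k + wt E i j * wt E i k \<le>
      3 * min (wt E i j + wt E i k) (min (wt E i j + wt E j k) (wt E i k + wt E j k))"
    unfolding wt_sym[of k i] wt_sym[of k j] wt_sym[of j i]
    by (cases "E i j"; cases "E i k"; cases "E j k") (simp_all add: wt_def)
qed

context
  fixes d :: nat
  assumes regular: "d_regular n E d"
begin

lemma sum_wt_eq_degree:
  assumes "a < n"
  shows "(\<Sum>b\<in>{0..<n}. wt E a b) = real d"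
proof -
  have "(\<Sum>b\<in>{0..<n}. wt E a b) = real (card ({0..<n} \<inter> Collect (E a)))"
    unfolding wt_def by (simp add: sum.If_cases)
  also have "{0..<n} \<inter> Collect (E a) = {v. v < n \<and> E a v}"
    by auto
  finally show ?thesis
    using regular assms unfolding d_regular_def by simp
qed

lemma sum_neighbour_pairs:
  assumes "c < n"
  shows "(\<Sum>a\<in>{0..<n}. \<Sum>b\<in>{0..<n}. if a < b then wt E c a * wt E c b else 0) = real d * (real d - 1) / 2"
proof -
  have "(wt E c a)\<^sup>2 = wt E c a" for a
    unfolding wt_def by simp
  then have "(\<Sum>a\<in>{0..<n}. (wt E c a)\<^sup>2) = real d"
    using sum_wt_eq_degree[OF assms] by simp
  then show ?thesis
    using square_sum_eq_pairs[of "wt E c" "{0..<n}"] sum_wt_eq_degree[OF assms]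
    by (simp add: power2_eq_square algebra_simps)
qed

lemma sum_wedges: "(\<Sum>(i, j, k)\<in>triples n. wedges E i j k) = real n * (real d * (real d - 1) / 2)"
proof -
  let ?F = "\<lambda>a b c. wt E c a * wt E c b"
  let ?I = "{0..<n}"
  have "(\<Sum>(i, j, k)\<in>triples n. wedges E i j k) = (\<Sum>(i, j, k)\<in>triples n. ?F i j k + ?F i k j + ?F j k i)"
    unfolding wedges_def by simp
  also have "\<dots> = (\<Sum>a\<in>?I. \<Sum>b\<in>?I. \<Sum>c\<in>?I. if a < b \<and> c \<noteq> a \<and> c \<noteq> b then ?F a b c else 0)"
    by (rule sum_triples_pairs)
  also have "\<dots> = (\<Sum>a\<in>?I. \<Sum>b\<in>?I. \<Sum>c\<in>?I. if a < b then ?F a b c else 0)"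
    using adj_irrefl by (intro sum.cong refl) (auto simp: wt_def)
  also have "\<dots> = (\<Sum>a\<in>?I. \<Sum>c\<in>?I. \<Sum>b\<in>?I. if a < b then ?F a b c else 0)"
    by (rule sum.cong[OF refl], rule sum.swap)
  also have "\<dots> = (\<Sum>c\<in>?I. \<Sum>a\<in>?I. \<Sum>b\<in>?I. if a < b then ?F a b c else 0)"
    by (rule sum.swap)
  also have "\<dots> = (\<Sum>c\<in>?I. real d * (real d - 1) / 2)"
    by (intro sum.cong refl) (simp add: sum_neighbour_pairs)
  finally show ?thesis
    by simp
qed

lemma TC_le_regular: "TC n E T \<le> real n ^ 2 * real d"
  using TC_le[of n E T] sum_wt_eq_degree by (simp add: power2_eq_square)

lemma BC_ge_regular:
  assumes "2 \<le> d"
  shows "real n * real d / 6 \<le> BC n E"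
proof -
  have "real n * real d \<le> real n * (real d * (real d - 1))"
    using assms by (intro mult_left_mono) auto
  then show ?thesis
    using sum_wedges wedges_le_3_BC by simp
qed

lemma BC_le_regular: "BC n E \<le> real n * real d ^ 2 / 2"
proof -
  have "real n * (real d * (real d - 1) / 2) \<le> real n * (real d * real d / 2)"
    by (intro mult_left_mono divide_right_mono) auto
  then show ?thesis
    using sum_wedges BC_le_wedges by (simp add: power2_eq_square)
qed

end

end

section \<open>Expanders\<close>

lemma card_boundary_eq_sum:
  fixes n :: nat
  assumes "C \<subseteq> {0..<n}"
  shows "card {(u, v). u \<in> C \<and> v \<in> {0..<n} - C \<and> E u v} = (\<Sum>u\<in>C. card {v \<in> {0..<n} - C. E u v})"
proof -
  have "{(u, v). u \<in> C \<and> v \<in> {0..<n} - C \<and> E u v} = (SIGMA u:C. {v \<in> {0..<n} - C. E u v})"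
    by (rule set_eqI) auto
  moreover have "finite C"
    using assms finite_subset by blast
  ultimately show ?thesis
    by (simp add: card_SigmaI)
qed

lemma expander_partition_boundary:
  assumes expander: "edge_expander n E \<alpha> k"
    and mem: "\<And>a. a < n \<Longrightarrow> a \<in> P a"
    and sub: "\<And>a. a < n \<Longrightarrow> P a \<subseteq> {0..<n}"
    and small: "\<And>a. a < n \<Longrightarrow> real (card (P a)) \<le> k"
    and block: "\<And>a b. a < n \<Longrightarrow> b \<in> P a \<Longrightarrow> P b = P a"
  shows "\<alpha> * real n \<le> (\<Sum>a\<in>{0..<n}. real (card {b \<in> {0..<n}. E a b \<and> b \<notin> P a}))"
proof -
  define blocks where "blocks = P ` {0..<n}"
  have "finite (P a)" if "a < n" for a
    using sub[OF that] by (rule finite_subset) simp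
  then have finite_blocks: "finite blocks" "\<forall>C\<in>blocks. finite C"
    unfolding blocks_def by auto
  have disjoint: "\<forall>C\<in>blocks. \<forall>D\<in>blocks. C \<noteq> D \<longrightarrow> C \<inter> D = {}"
  proof (intro ballI impI)
    fix C D
    assume "C \<in> blocks" "D \<in> blocks" "C \<noteq> D"
    obtain a b where ab: "a < n" "b < n" "C = P a" "D = P b"
      using \<open>C \<in> blocks\<close> \<open>D \<in> blocks\<close> unfolding blocks_def by auto
    show "C \<inter> D = {}"
    proof (rule ccontr)
      assume "C \<inter> D \<noteq> {}"
      then obtain x where "x \<in> P a" "x \<in> P b"
        using ab by auto
      then have "P x = P a" "P x = P b"
        using block ab(1,2) by blast+
      then have "P a = P b"
        by simp
      then show False
        using \<open>C \<noteq> D\<close> ab by simp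
    qed
  qed
  have union: "\<Union>blocks = {0..<n}"
  proof
    show "\<Union>blocks \<subseteq> {0..<n}"
      unfolding blocks_def using sub by fastforce
    show "{0..<n} \<subseteq> \<Union>blocks"
      unfolding blocks_def using mem by fastforce
  qed
  have sum_blocks: "(\<Sum>a\<in>{0..<n}. f a) = (\<Sum>C\<in>blocks. \<Sum>a\<in>C. f a)" for f :: "nat \<Rightarrow> real"
    using sum.Union_disjoint[OF finite_blocks(2) disjoint, of f] union by simp
  let ?X = "\<lambda>a. real (card {b \<in> {0..<n}. E a b \<and> b \<notin> P a})"
  have "\<alpha> * real n = (\<Sum>C\<in>blocks. \<Sum>a\<in>C. \<alpha>)"
    using sum_blocks[of "\<lambda>_. \<alpha>"] by (simp add: mult.commute)
  also have "\<dots> \<le> (\<Sum>C\<in>blocks. \<Sum>a\<in>C. ?X a)"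
  proof (rule sum_mono)
    fix C
    assume "C \<in> blocks"
    then obtain c where c: "c < n" "C = P c"
      unfolding blocks_def by auto
    have "{b \<in> {0..<n}. E a b \<and> b \<notin> P a} = {b \<in> {0..<n} - C. E a b}" if "a \<in> C" for a
      using block[OF c(1)] c(2) that by auto
    then have "(\<Sum>a\<in>C. ?X a) = real (\<Sum>a\<in>C. card {b \<in> {0..<n} - C. E a b})"
      unfolding of_nat_sum by (intro sum.cong refl) simp
    also have "\<dots> = real (card {(u, v). u \<in> C \<and> v \<in> {0..<n} - C \<and> E u v})"
      using card_boundary_eq_sum[OF sub[OF c(1)]] c(2) by simp
    also have "\<dots> \<ge> \<alpha> * real (card C)"
      using expander sub[OF c(1)] small[OF c(1)] c(2) unfolding edge_expander_def by blast
    finally show "(\<Sum>a\<in>C. \<alpha>) \<le> (\<Sum>a\<in>C. ?X a)"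
      by (simp add: mult.commute)
  qed
  also have "\<dots> = (\<Sum>a\<in>{0..<n}. ?X a)"
    by (rule sum_blocks[symmetric])
  finally show ?thesis .
qed

lemma one_regular_partner:
  assumes "is_graph n E" "d_regular n E 1" "u < n"
  obtains v where "v < n" "v \<noteq> u" "{w. w < n \<and> E u w} = {v}" "{w. w < n \<and> E v w} = {u}"
proof -
  have neighbour: "\<exists>v. {w. w < n \<and> E x w} = {v}" if "x < n" for x
    using assms(2) that unfolding d_regular_def by (simp add: card_1_singleton_iff)
  then obtain v where v: "{w. w < n \<and> E u w} = {v}"
    using assms(3) by blast
  then have "v < n" "E u v"
    by auto
  then have "E v u" "v \<noteq> u"
    using adj_sym[OF assms(1)] adj_irrefl[OF assms(1)] by metis+
  obtain w where "{w. w < n \<and> E v w} = {w}"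
    using neighbour \<open>v < n\<close> by blast
  moreover have "u \<in> {w. w < n \<and> E v w}"
    using \<open>E v u\<close> assms(3) by simp
  ultimately have "{w. w < n \<and> E v w} = {u}"
    by auto
  then show ?thesis
    using that \<open>v < n\<close> \<open>v \<noteq> u\<close> v by blast
qed

text \<open>An edge of a perfect matching is a two-element set with empty boundary.\<close>

lemma one_regular_not_expander:
  assumes "is_graph n E" "d_regular n E 1" "edge_expander n E \<alpha> k" "0 < \<alpha>" "2 \<le> k" "0 < n"
  shows False
proof -
  obtain v where v: "v < n" "v \<noteq> 0" "{w. w < n \<and> E 0 w} = {v}" "{w. w < n \<and> E v w} = {0}"
    using one_regular_partner[OF assms(1,2,6)] by blast
  let ?S = "{0, v}"
  have "w = v" if "w < n" "E 0 w" for w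
    using v(3) that by blast
  moreover have "w = 0" if "w < n" "E v w" for w
    using v(4) that by blast
  ultimately have closed: "w \<in> ?S" if "u \<in> ?S" "w < n" "E u w" for u w
    using that by auto
  have boundary: "{(u, w). u \<in> ?S \<and> w \<in> {0..<n} - ?S \<and> E u w} = {}"
  proof (rule equals0I)
    fix p
    assume "p \<in> {(u, w). u \<in> ?S \<and> w \<in> {0..<n} - ?S \<and> E u w}"
    then obtain u w where "u \<in> ?S" "w \<in> {0..<n} - ?S" "E u w"
      by blast
    then show False
      using closed[of u w] by simp
  qed
  have "?S \<subseteq> {0..<n}"
    using v(1) assms(6) by auto
  moreover have card_S: "real (card ?S) = 2"
    using v(2) by simp
  ultimately have "\<alpha> * real (card ?S) \<le> real (card {(u, w). u \<in> ?S \<and> w \<in> {0..<n} - ?S \<and> E u w})"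
    using spec[OF assms(3)[unfolded edge_expander_def], of ?S] assms(5) by simp
  then have "\<alpha> * 2 \<le> 0"
    by (simp only: boundary card_S card.empty of_nat_0)
  then show False
    using assms(4) by simp
qed

definition max_half_subtree :: "nat \<Rightarrow> hctree \<Rightarrow> nat \<Rightarrow> hctree" where
  "max_half_subtree n T a = (SOME u. u \<in> subtrees T \<and> a \<in> leaf_set u \<and> 2 * card (leaf_set u) \<le> n \<and>
     (\<forall>v\<in>subtrees T. a \<in> leaf_set v \<and> 2 * card (leaf_set v) \<le> n \<longrightarrow> v \<in> subtrees u))"

context
  fixes n :: nat and T :: hctree
  assumes hctree: "is_hctree n T" and two_le_n: "2 \<le> n"
begin

lemma max_half_subtree:
  assumes "a < n"
  shows "max_half_subtree n T a \<in> subtrees T" "a \<in> leaf_set (max_half_subtree n T a)"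
    "2 * card (leaf_set (max_half_subtree n T a)) \<le> n"
    "\<And>v. v \<in> subtrees T \<Longrightarrow> a \<in> leaf_set v \<Longrightarrow> 2 * card (leaf_set v) \<le> n \<Longrightarrow>
      v \<in> subtrees (max_half_subtree n T a)"
proof -
  define C where "C = {v \<in> subtrees T. a \<in> leaf_set v \<and> 2 * card (leaf_set v) \<le> n}"
  have "Leaf a \<in> C"
    unfolding C_def using Leaf_in_subtrees leaf_set_hctree[OF hctree] assms two_le_n by auto
  then obtain u where "u \<in> C" "\<forall>v\<in>C. v \<in> subtrees u"
    using subtrees_sharing_leaf_greatest[OF distinct_leaves_hctree[OF hctree], of C a]
    unfolding C_def by blast
  then have "\<exists>u. u \<in> subtrees T \<and> a \<in> leaf_set u \<and> 2 * card (leaf_set u) \<le> n \<and>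
     (\<forall>v\<in>subtrees T. a \<in> leaf_set v \<and> 2 * card (leaf_set v) \<le> n \<longrightarrow> v \<in> subtrees u)"
    unfolding C_def by blast
  from someI_ex[OF this] show "max_half_subtree n T a \<in> subtrees T" "a \<in> leaf_set (max_half_subtree n T a)"
    "2 * card (leaf_set (max_half_subtree n T a)) \<le> n"
    "\<And>v. v \<in> subtrees T \<Longrightarrow> a \<in> leaf_set v \<Longrightarrow> 2 * card (leaf_set v) \<le> n \<Longrightarrow>
      v \<in> subtrees (max_half_subtree n T a)"
    unfolding max_half_subtree_def by blast+
qed

lemma max_half_subtree_leaves_subset:
  "a < n \<Longrightarrow> leaf_set (max_half_subtree n T a) \<subseteq> {0..<n}"
  using max_half_subtree(1) leaf_set_subtree leaf_set_hctree[OF hctree] by blast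

lemma max_half_subtree_eq:
  assumes "a < n" "b \<in> leaf_set (max_half_subtree n T a)"
  shows "max_half_subtree n T b = max_half_subtree n T a"
proof -
  have "b < n"
    using max_half_subtree_leaves_subset[OF assms(1)] assms(2) by auto
  then have below: "max_half_subtree n T a \<in> subtrees (max_half_subtree n T b)"
    using max_half_subtree[OF assms(1)] max_half_subtree(4)[of b] assms(2) by blast
  then have "a \<in> leaf_set (max_half_subtree n T b)"
    using leaf_set_subtree max_half_subtree(2)[OF assms(1)] by blast
  then have "max_half_subtree n T b \<in> subtrees (max_half_subtree n T a)"
    using max_half_subtree[OF \<open>b < n\<close>] max_half_subtree(4)[OF assms(1)] by blast
  then show ?thesis
    using below subtrees_antisym by blast
qed

lemma large_lca_if_not_in_max_half_subtree:
  assumes "a < n" "b < n" "b \<notin> leaf_set (max_half_subtree n T a)"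
  shows "real n < 2 * real (card (leaf_set (lca T {a, b})))"
proof (rule ccontr)
  assume "\<not> ?thesis"
  then have "lca T {a, b} \<in> subtrees (max_half_subtree n T a)"
    using max_half_subtree(4)[OF assms(1)] lca_hctree[OF hctree, of "{a, b}"] assms(1,2) by auto
  then have "{a, b} \<subseteq> leaf_set (max_half_subtree n T a)"
    using leaf_set_subtree lca_hctree(2)[OF hctree, of "{a, b}"] assms(1,2) by fastforce
  then show False
    using assms(3) by simp
qed

end

lemma TC_ge_expander:
  assumes graph: "is_graph n E" and hctree: "is_hctree n T"
    and expander: "edge_expander n E \<alpha> (real n / 2)" and "4 \<le> n"
  shows "real n * \<alpha> * (real n - 4) / 4 \<le> TC n E T"
proof -
  have two_le_n: "2 \<le> n"
    using \<open>4 \<le> n\<close> by simp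
  let ?P = "\<lambda>a. leaf_set (max_half_subtree n T a)"
  define f where "f a b = wt E a b * real (card (leaf_set (lca T {a, b}) - {a, b}))" for a b
  have f_sym: "f a b = f b a" for a b
    unfolding f_def using wt_sym[OF graph] by (simp add: insert_commute)
  have crossing: "real n / 2 - 2 \<le> f a b" if "a < n" "b < n" "E a b" "b \<notin> ?P a" for a b
  proof -
    let ?L = "leaf_set (lca T {a, b})"
    have "card ?L - card {a, b} \<le> card (?L - {a, b})"
      by (rule diff_card_le_card_Diff) simp
    moreover have "card {a, b} \<le> 2"
      by (simp add: card_insert_if)
    moreover have "real n < 2 * real (card ?L)"
      using large_lca_if_not_in_max_half_subtree[OF hctree two_le_n] that by blast
    ultimately show ?thesis
      using that(3) unfolding f_def wt_def by simp
  qed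
  have "real n * \<alpha> * (real n - 4) / 2 = (real n / 2 - 2) * (\<alpha> * real n)"
    by (simp add: field_simps)
  also have "\<dots> \<le> (real n / 2 - 2) * (\<Sum>a\<in>{0..<n}. real (card {b \<in> {0..<n}. E a b \<and> b \<notin> ?P a}))"
  proof (intro mult_left_mono expander_partition_boundary[OF expander])
    fix a b
    assume "a < n"
    then show "a \<in> ?P a" "?P a \<subseteq> {0..<n}"
      using max_half_subtree(2)[OF hctree two_le_n] max_half_subtree_leaves_subset[OF hctree two_le_n]
      by auto
    have "2 * card (?P a) \<le> n"
      using max_half_subtree(3)[OF hctree two_le_n \<open>a < n\<close>] .
    then show "real (card (?P a)) \<le> real n / 2"
      by linarith
    show "b \<in> ?P a \<Longrightarrow> ?P b = ?P a"
      using max_half_subtree_eq[OF hctree two_le_n \<open>a < n\<close>] by simp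
  qed (use \<open>4 \<le> n\<close> in simp)
  also have "\<dots> = (\<Sum>a\<in>{0..<n}. \<Sum>b\<in>{0..<n}. if E a b \<and> b \<notin> ?P a then real n / 2 - 2 else 0)"
    by (simp add: sum_distrib_left sum.inter_filter[symmetric] mult.commute)
  also have "\<dots> \<le> (\<Sum>a\<in>{0..<n}. \<Sum>b\<in>{0..<n}. if a \<noteq> b then f a b else 0)"
    using crossing adj_irrefl[OF graph] wt_nonneg[of E] unfolding f_def
    by (intro sum_mono) auto
  also have "\<dots> = 2 * (\<Sum>a\<in>{0..<n}. \<Sum>b\<in>{0..<n}. if a < b then f a b else 0)"
    using f_sym by (rule sum_pairs_symmetric)
  also have "\<dots> \<le> 2 * TC n E T"
    using TC_ge_sum_lca_leaves[OF hctree, of E] unfolding f_def by simp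
  finally show ?thesis
    by simp
qed

lemma rho_eq_if_BC_pos: "0 < BC n E \<Longrightarrow> rho n E T = ereal (TC n E T / BC n E)"
  unfolding rho_def by simp

lemma is_hctree_star: "0 < n \<Longrightarrow> is_hctree n (Node (map Leaf [0..<n]))"
  unfolding is_hctree_def by (simp add: comp_def)

lemma rho_star_le_regular:
  assumes graph: "is_graph n E" and regular: "d_regular n E d" and "2 \<le> d" "0 < n"
  shows "rho_star n E \<le> ereal (6 * real n)"
proof -
  let ?T = "Node (map Leaf [0..<n])"
  have BC_ge: "real n * real d / 6 \<le> BC n E"
    using BC_ge_regular[OF graph regular \<open>2 \<le> d\<close>] .
  moreover have "0 < real n * real d / 6"
    using assms by simp
  ultimately have BC_pos: "0 < BC n E"
    by linarith
  have "TC n E ?T \<le> 6 * real n * (real n * real d / 6)"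
    using TC_le_regular[OF graph regular, of ?T] by (simp add: power2_eq_square)
  also have "\<dots> \<le> 6 * real n * BC n E"
    using BC_ge by (intro mult_left_mono) auto
  finally have "rho n E ?T \<le> ereal (6 * real n)"
    using BC_pos by (simp add: rho_eq_if_BC_pos pos_divide_le_eq)
  moreover have "rho_star n E \<le> rho n E ?T"
    unfolding rho_star_def using is_hctree_star \<open>0 < n\<close> by (intro INF_lower) simp
  ultimately show ?thesis
    by simp
qed

lemma rho_star_ge_regular_expander:
  assumes graph: "is_graph n E" and regular: "d_regular n E d"
    and expander: "edge_expander n E (real d / 10) (real n / 2)" and "2 \<le> d" "8 \<le> n"
  shows "ereal (real n / (40 * real d)) \<le> rho_star n E"
  unfolding rho_star_def
proof (rule INF_greatest)
  fix T
  assume "T \<in> {T. is_hctree n T}"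
  then have TC_ge: "real n * (real d / 10) * (real n - 4) / 4 \<le> TC n E T"
    using TC_ge_expander[OF graph _ expander] \<open>8 \<le> n\<close> by simp
  have "0 < real n * real d / 6"
    using assms(4,5) by simp
  then have BC_pos: "0 < BC n E"
    using BC_ge_regular[OF graph regular \<open>2 \<le> d\<close>] by linarith
  have "real n / (40 * real d) * BC n E \<le> real n / (40 * real d) * (real n * real d ^ 2 / 2)"
    using BC_le_regular[OF graph regular] by (intro mult_left_mono) auto
  also have "\<dots> = real n * real d * real n / 80"
    using \<open>2 \<le> d\<close> by (simp add: field_simps power2_eq_square)
  also have "\<dots> \<le> real n * real d * (2 * (real n - 4)) / 80"
    using \<open>8 \<le> n\<close> by (intro divide_right_mono mult_left_mono) auto
  also have "\<dots> \<le> TC n E T"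
    using TC_ge by (simp add: field_simps)
  finally show "ereal (real n / (40 * real d)) \<le> rho n E T"
    using BC_pos by (simp add: rho_eq_if_BC_pos pos_le_divide_eq)
qed

theorem theorem3:
  fixes d :: nat
  assumes "d > 0"
  shows "\<exists>c1 c2 :: real. c1 > 0 \<and> c2 > 0 \<and>
          (\<exists>N::nat. \<forall>n\<ge>N. \<forall>E. is_graph n E \<and> d_regular n E d \<and>
               edge_expander n E (real d / 10) (real n / 2) \<longrightarrow>
               ereal (c1 * real n) \<le> rho_star n E \<and> rho_star n E \<le> ereal (c2 * real n))"
proof (intro exI conjI)
  show "0 < 1 / (40 * real d)" "(0::real) < 6"
    using assms by simp_all
  show "\<forall>n\<ge>8. \<forall>E. is_graph n E \<and> d_regular n E d \<and> edge_expander n E (real d / 10) (real n / 2) \<longrightarrow>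
      ereal (1 / (40 * real d) * real n) \<le> rho_star n E \<and> rho_star n E \<le> ereal (6 * real n)"
  proof (intro allI impI, elim conjE)
    fix n E
    assume "8 \<le> n" and graph: "is_graph n E" and regular: "d_regular n E d"
      and expander: "edge_expander n E (real d / 10) (real n / 2)"
    have "d \<noteq> 1"
      using one_regular_not_expander[OF graph _ expander] regular \<open>8 \<le> n\<close> by auto
    then have "2 \<le> d"
      using assms by simp
    then show "ereal (1 / (40 * real d) * real n) \<le> rho_star n E \<and> rho_star n E \<le> ereal (6 * real n)"
      using rho_star_ge_regular_expander[OF graph regular expander] rho_star_le_regular[OF graph regular]
        \<open>8 \<le> n\<close> by simp
  qed
qed

end
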